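(* Let $n\ge3$. Suppose that for every set $W\subseteq V$ with $|W|=n$ that can be generated from some connected pair, there exist $X\supseteq W$ with $D[X]$ a directed sub-block and a node $i\in W$ reachable from all other nodes in both $D[W]$ and $D[X]$. Then the same conclusion holds for every set $W\subseteq V$ with $|W|=n+1$ that can be generated from some connected pair.
   Context: $D=(V,A)$ is a directed graph. $\mathrm{IN}(X)$ is the set of nodes from which some member of $X$ is reachable by a directed path. For disjoint nonempty $X,Y,Z$, $f_E(X,Y,Z)=1$ iff $\mathrm{IN}(X)\cap\mathrm{IN}(Y)=\emptyset$ computed in $D-Z$; node $j$ is dynamically partitioning relative to $k$ and $Y$ iff $f_E(\{k\},Y,\{j\})=1$. A connected pair is a set $\{i,j\}$ joined by an arc in some direction. A set $W_n$ of size $n$ can be generated from $W_m$ of size $m$, $2\le m<n$, iff there are sets $W_m\subset\dots\subset W_n$ with $W_{l+1}=W_l\cup\{k\}$, $k\in V\setminus W_l$, such that there is an arc from $k$ to some $j\in W_l$ that is not dynamically partitioning relative to $k$ and $W_l\setminus\{j\}$. $D[W]$ is the subgraph induced on $W$; reachability in $D[W]$ is via directed paths inside $D[W]$. A graph is biconnected if it has at least three vertices, is connected and remains connected after deleting any one vertex. $D[X]$ is a directed sub-block if some node of $X$ is reachable within $D[X]$ from all other nodes and the underlying undirected graph of $D[X]$ is biconnected. *)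

theory Defs
  imports Main
begin

definition digraph :: "'a set \<Rightarrow> ('a \<times> 'a) set \<Rightarrow> bool" where
  "digraph V A \<longleftrightarrow> finite V \<and> A \<subseteq> V \<times> V"

definition arcs_on :: "('a \<times> 'a) set \<Rightarrow> 'a set \<Rightarrow> ('a \<times> 'a) set" where
  "arcs_on A S = A \<inter> (S \<times> S)"

definition reach_in :: "('a \<times> 'a) set \<Rightarrow> 'a set \<Rightarrow> 'a \<Rightarrow> 'a \<Rightarrow> bool" where
  "reach_in A S x y \<longleftrightarrow> x \<in> S \<and> y \<in> S \<and> (x, y) \<in> (arcs_on A S)\<^sup>*"

definition IN_set :: "'a set \<Rightarrow> ('a \<times> 'a) set \<Rightarrow> 'a set \<Rightarrow> 'a set \<Rightarrow> 'a set" where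
  "IN_set V A Z X = {v. \<exists>x\<in>X. reach_in A (V - Z) v x}"

definition fE :: "'a set \<Rightarrow> ('a \<times> 'a) set \<Rightarrow> 'a set \<Rightarrow> 'a set \<Rightarrow> 'a set \<Rightarrow> bool" where
  "fE V A X Y Z \<longleftrightarrow> IN_set V A Z X \<inter> IN_set V A Z Y = {}"

definition dyn_part :: "'a set \<Rightarrow> ('a \<times> 'a) set \<Rightarrow> 'a \<Rightarrow> 'a \<Rightarrow> 'a set \<Rightarrow> bool" where
  "dyn_part V A j k Y \<longleftrightarrow> fE V A {k} Y {j}"

definition gen_step :: "'a set \<Rightarrow> ('a \<times> 'a) set \<Rightarrow> 'a set \<Rightarrow> 'a set \<Rightarrow> bool" where
  "gen_step V A W W' \<longleftrightarrow> (\<exists>k \<in> V - W. W' = insert k W \<and>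
      (\<exists>j \<in> W. (k, j) \<in> A \<and> \<not> dyn_part V A j k (W - {j})))"

definition generated_from :: "'a set \<Rightarrow> ('a \<times> 'a) set \<Rightarrow> 'a set \<Rightarrow> 'a set \<Rightarrow> bool" where
  "generated_from V A Wm Wn \<longleftrightarrow> finite Wm \<and> finite Wn \<and> 2 \<le> card Wm \<and> card Wm < card Wn
      \<and> (gen_step V A)\<^sup>*\<^sup>* Wm Wn"

definition connected_pair :: "'a set \<Rightarrow> ('a \<times> 'a) set \<Rightarrow> 'a set \<Rightarrow> bool" where
  "connected_pair V A P \<longleftrightarrow> (\<exists>i j. P = {i, j} \<and> i \<noteq> j \<and> ((i, j) \<in> A \<or> (j, i) \<in> A))"

definition generated_from_pair :: "'a set \<Rightarrow> ('a \<times> 'a) set \<Rightarrow> 'a set \<Rightarrow> bool" where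
  "generated_from_pair V A W \<longleftrightarrow> (\<exists>P. connected_pair V A P \<and> generated_from V A P W)"

definition und_connected :: "('a \<times> 'a) set \<Rightarrow> 'a set \<Rightarrow> bool" where
  "und_connected A S \<longleftrightarrow> (\<forall>x\<in>S. \<forall>y\<in>S. (x, y) \<in> (arcs_on A S \<union> (arcs_on A S)\<inverse>)\<^sup>*)"

definition und_biconnected :: "('a \<times> 'a) set \<Rightarrow> 'a set \<Rightarrow> bool" where
  "und_biconnected A S \<longleftrightarrow> finite S \<and> 3 \<le> card S \<and> und_connected A S
      \<and> (\<forall>v\<in>S. und_connected A (S - {v}))"

definition directed_sub_block :: "'a set \<Rightarrow> ('a \<times> 'a) set \<Rightarrow> 'a set \<Rightarrow> bool" where
  "directed_sub_block V A X \<longleftrightarrow> X \<subseteq> V \<and> (\<exists>r\<in>X. \<forall>x\<in>X. reach_in A X x r)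
      \<and> und_biconnected A X"

definition has_block_root :: "'a set \<Rightarrow> ('a \<times> 'a) set \<Rightarrow> 'a set \<Rightarrow> bool" where
  "has_block_root V A W \<longleftrightarrow> (\<exists>X. W \<subseteq> X \<and> directed_sub_block V A X \<and>
      (\<exists>i\<in>W. (\<forall>w\<in>W. reach_in A W w i) \<and> (\<forall>x\<in>X. reach_in A X x i)))"

end

theory Submission
  imports Defs
begin

text \<open>
  Let \<open>W\<close> arise from \<open>W'\<close> by adding \<open>k\<close> with an arc \<open>k \<rightarrow> j\<close>, and let \<open>X \<supseteq> W'\<close> be the
  sub-block whose vertices all reach \<open>i\<close>. If \<open>k \<notin> X\<close>, the fact that \<open>j\<close> is not dynamically
  partitioning yields a vertex \<open>v\<close> reaching both \<open>k\<close> and some \<open>w \<in> W' - {j}\<close> while avoiding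
  \<open>j\<close>. From these paths one cuts out an ear of \<open>X\<close> through \<open>k\<close>: a path outside \<open>X\<close>
  joining \<open>j\<close> to some \<open>b \<in> X - {j}\<close>, each of whose vertices has a directed path into \<open>X\<close>
  (along the ear to \<open>k \<rightarrow> j\<close>, or to the arc by which the ear enters \<open>b\<close>). Adding an ear
  preserves biconnectivity of the underlying graph, and the new vertices still reach \<open>i\<close>;
  in \<open>W\<close> itself, \<open>k\<close> reaches \<open>i\<close> through \<open>j\<close>.
\<close>

lemma arcs_on_mono: "S \<subseteq> T \<Longrightarrow> arcs_on A S \<subseteq> arcs_on A T"
  unfolding arcs_on_def by auto

lemma rtrancl_arcs_on_mono: "S \<subseteq> T \<Longrightarrow> (x, y) \<in> (arcs_on A S)\<^sup>* \<Longrightarrow> (x, y) \<in> (arcs_on A T)\<^sup>*"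
  using rtrancl_mono[OF arcs_on_mono] by blast

lemma rtrancl_arcs_on_source_in: "(x, y) \<in> (arcs_on A S)\<^sup>* \<Longrightarrow> y \<in> S \<Longrightarrow> x \<in> S"
  by (induction rule: converse_rtrancl_induct) (auto simp: arcs_on_def)

definition walk :: "('a \<times> 'a) set \<Rightarrow> 'a list \<Rightarrow> bool" where
  "walk R p \<longleftrightarrow> p \<noteq> [] \<and> successively (\<lambda>x y. (x, y) \<in> R) p"

lemma walk_singleton [simp]: "walk R [x]"
  by (simp add: walk_def)

lemma walk_Cons_Cons [simp]: "walk R (x # y # p) \<longleftrightarrow> (x, y) \<in> R \<and> walk R (y # p)"
  by (simp add: walk_def)

lemma walk_append:
  "xs \<noteq> [] \<Longrightarrow> ys \<noteq> [] \<Longrightarrow>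
   walk R (xs @ ys) \<longleftrightarrow> walk R xs \<and> walk R ys \<and> (last xs, hd ys) \<in> R"
  by (auto simp: walk_def successively_append_iff)

lemma walk_rev: "walk R p \<Longrightarrow> walk (R\<inverse>) (rev p)"
  by (simp add: walk_def)

lemma walk_mono: "walk R p \<Longrightarrow> R \<subseteq> R' \<Longrightarrow> walk R' p"
  unfolding walk_def by (auto elim: successively_mono)

lemma walk_rtrancl_last:
  assumes "walk R p" "set p \<subseteq> S" "x \<in> set p"
  shows "(x, last p) \<in> (arcs_on R S)\<^sup>*"
  using assms
proof (induction p arbitrary: x rule: induct_list012)
  case (3 y z p)
  have yz: "(y, z) \<in> arcs_on R S"
    using "3.prems" by (auto simp: arcs_on_def)
  have IH: "(x', last (z # p)) \<in> (arcs_on R S)\<^sup>*" if "x' \<in> set (z # p)" for x'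
    using "3.IH"(2) "3.prems" that by auto
  show ?case
    using "3.prems"(3) IH converse_rtrancl_into_rtrancl[OF yz IH[of z]] by auto
qed (auto simp: walk_def)

lemma walk_rtrancl_hd:
  assumes "walk R p" "set p \<subseteq> S" "x \<in> set p"
  shows "(hd p, x) \<in> (arcs_on R S)\<^sup>*"
proof -
  have "arcs_on (R\<inverse>) S = (arcs_on R S)\<inverse>"
    by (auto simp: arcs_on_def)
  then have "(x, hd p) \<in> ((arcs_on R S)\<inverse>)\<^sup>*"
    using walk_rtrancl_last[OF walk_rev[OF assms(1)], of S x] assms
    by (simp add: last_rev walk_def)
  then show ?thesis
    by (simp add: rtrancl_converse)
qed

lemma rtrancl_arcs_on_obtain_walk:
  assumes "(x, y) \<in> (arcs_on R S)\<^sup>*" "x \<in> S"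
  obtains p where "walk R p" "distinct p" "hd p = x" "last p = y" "set p \<subseteq> S"
  using assms
proof (induction arbitrary: thesis rule: rtrancl_induct)
  case base
  then show ?case by (auto intro: base.prems(1)[of "[x]"])
next
  case (step y z)
  then obtain p where p: "walk R p" "distinct p" "hd p = x" "last p = y" "set p \<subseteq> S"
    by blast
  have yz: "(y, z) \<in> R" "z \<in> S"
    using step.hyps(2) by (auto simp: arcs_on_def)
  show ?case
  proof (cases "z \<in> set p")
    case True
    then obtain p1 p2 where p12: "p = p1 @ z # p2"
      by (meson split_list)
    show ?thesis
    proof (rule step.prems(1)[of "p1 @ [z]"])
      show "walk R (p1 @ [z])"
        using p(1) unfolding p12 by (cases "p1 = []") (auto simp: walk_append)
      show "hd (p1 @ [z]) = x"
        using p(3) unfolding p12 by (cases p1) auto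
    qed (use p p12 in auto)
  next
    case False
    show ?thesis
    proof (rule step.prems(1)[of "p @ [z]"])
      show "walk R (p @ [z])"
        using walk_append[of p "[z]" R] p yz by (simp add: walk_def)
    qed (use p yz False in \<open>auto simp: walk_def\<close>)
  qed
qed

lemma walk_first_exit:
  assumes "walk R p" "P (hd p)" "\<not> P (last p)"
  obtains ys y y' zs where "p = ys @ y # y' # zs" "\<forall>x\<in>set (ys @ [y]). P x" "\<not> P y'"
  using assms
proof (induction p arbitrary: thesis rule: induct_list012)
  case (3 x y p)
  show ?case
  proof (cases "P y")
    case True
    obtain ys z z' zs where "y # p = ys @ z # z' # zs" "\<forall>x\<in>set (ys @ [z]). P x" "\<not> P z'"
      using "3.IH"(2)[of thesis] "3.prems"(2,4) True by (metis last_ConsR list.discI list.sel(1) walk_Cons_Cons)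
    then show ?thesis
      using "3.prems"(1)[of "x # ys" z z' zs] "3.prems"(3) by auto
  next
    case False
    then show ?thesis
      using "3.prems"(1)[of "[]" x y p] "3.prems"(3) by auto
  qed
qed (auto simp: walk_def)

lemma walk_extend:
  "walk R p \<Longrightarrow> (a, hd p) \<in> R \<Longrightarrow> (last p, b) \<in> R \<Longrightarrow> walk R (a # p @ [b])"
  using walk_append[of "a # p" "[b]" R] walk_append[of "[a]" p R] by (simp add: walk_def)

lemma walk_arc_rtrancl:
  assumes "walk A p" "set p \<subseteq> E" "(last p, t) \<in> A" "t \<in> X" "x \<in> set p"
  shows "(x, t) \<in> (arcs_on A (X \<union> E))\<^sup>*"
proof -
  have "last p \<in> E"
    using assms(1,2) by (auto simp: walk_def)
  have "(x, last p) \<in> (arcs_on A (X \<union> E))\<^sup>*"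
    using walk_rtrancl_last[OF assms(1) _ assms(5), of "X \<union> E"] assms(2) by auto
  moreover have "(last p, t) \<in> arcs_on A (X \<union> E)"
    using \<open>last p \<in> E\<close> assms(3,4) by (auto simp: arcs_on_def)
  ultimately show ?thesis
    by (rule rtrancl_into_rtrancl)
qed

lemma rtrancl_arcs_on_restrict:
  assumes "(x, y) \<in> (arcs_on A T)\<^sup>*" "y \<in> S"
    and "\<And>u u'. u \<in> T - S \<Longrightarrow> (u, u') \<in> A \<Longrightarrow> (u', y) \<notin> (arcs_on A S)\<^sup>*"
  shows "(x, y) \<in> (arcs_on A S)\<^sup>*"
  using assms(1)
proof (induction rule: converse_rtrancl_induct)
  case (step u u')
  then have "u \<in> S" "u' \<in> S"
    using assms(2,3) rtrancl_arcs_on_source_in[OF step.IH] by (auto simp: arcs_on_def)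
  with step show ?case
    by (auto simp: arcs_on_def intro: converse_rtrancl_into_rtrancl)
qed simp

lemma arcs_on_Un_converse: "arcs_on (A \<union> A\<inverse>) S = arcs_on A S \<union> (arcs_on A S)\<inverse>"
  by (auto simp: arcs_on_def)

lemma und_connected_iff: "und_connected A S \<longleftrightarrow> (\<forall>x\<in>S. \<forall>y\<in>S. (x, y) \<in> (arcs_on (A \<union> A\<inverse>) S)\<^sup>*)"
  by (simp add: und_connected_def arcs_on_Un_converse)

lemma rtrancl_arcs_on_Un_converse_sym:
  "(x, y) \<in> (arcs_on (A \<union> A\<inverse>) S)\<^sup>* \<Longrightarrow> (y, x) \<in> (arcs_on (A \<union> A\<inverse>) S)\<^sup>*"
  using sym_rtrancl[of "arcs_on (A \<union> A\<inverse>) S"] by (auto simp: sym_def arcs_on_def)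

lemma und_connected_if_vertex_deleted:
  assumes "finite S" "3 \<le> card S" "\<forall>v\<in>S. und_connected A (S - {v})"
  shows "und_connected A S"
  unfolding und_connected_iff
proof (intro ballI)
  fix x y assume xy: "x \<in> S" "y \<in> S"
  have "card {x, y} < card S"
    using assms(2) by (cases "x = y") auto
  then obtain v where v: "v \<in> S" "v \<notin> {x, y}"
    by (metis card_mono finite.emptyI finite_insert not_le subsetI)
  then have "(x, y) \<in> (arcs_on (A \<union> A\<inverse>) (S - {v}))\<^sup>*"
    using assms(3) xy unfolding und_connected_iff by auto
  then show "(x, y) \<in> (arcs_on (A \<union> A\<inverse>) S)\<^sup>*"
    by (rule rtrancl_arcs_on_mono[rotated]) auto
qed

lemma und_connected_attach:
  assumes "und_connected A T" "T \<subseteq> Y"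
    and "\<forall>y\<in>Y. \<exists>x\<in>T. (x, y) \<in> (arcs_on (A \<union> A\<inverse>) Y)\<^sup>*"
  shows "und_connected A Y"
  unfolding und_connected_iff
proof (intro ballI)
  fix y y' assume "y \<in> Y" "y' \<in> Y"
  then obtain x x' where "x \<in> T" "x' \<in> T"
    and xy: "(x, y) \<in> (arcs_on (A \<union> A\<inverse>) Y)\<^sup>*" and xy': "(x', y') \<in> (arcs_on (A \<union> A\<inverse>) Y)\<^sup>*"
    using assms(3) by blast
  have "(x, x') \<in> (arcs_on (A \<union> A\<inverse>) T)\<^sup>*"
    using assms(1) \<open>x \<in> T\<close> \<open>x' \<in> T\<close> unfolding und_connected_iff by blast
  then have "(x, x') \<in> (arcs_on (A \<union> A\<inverse>) Y)\<^sup>*"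
    by (rule rtrancl_arcs_on_mono[OF assms(2)])
  with xy xy' show "(y, y') \<in> (arcs_on (A \<union> A\<inverse>) Y)\<^sup>*"
    using rtrancl_arcs_on_Un_converse_sym rtrancl_trans by metis
qed

lemma walk_avoiding_vertex:
  assumes "walk R p" "distinct p" "y \<in> set p" "y \<noteq> u"
  shows "(hd p, y) \<in> (arcs_on R (set p - {u}))\<^sup>* \<or> (y, last p) \<in> (arcs_on R (set p - {u}))\<^sup>*"
proof (cases "u \<in> set p")
  case False
  then show ?thesis
    using walk_rtrancl_hd[OF assms(1) _ assms(3)] by auto
next
  case True
  then obtain p1 p2 where p: "p = p1 @ u # p2"
    by (meson split_list)
  have sub: "set p1 \<subseteq> set p - {u}" "set p2 \<subseteq> set p - {u}"
    using assms(2) p by auto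
  have "y \<in> set p1 \<or> y \<in> set p2"
    using assms(3,4) p by auto
  then show ?thesis
  proof
    assume y: "y \<in> set p1"
    then have "p1 \<noteq> []"
      by auto
    then have "walk R p1" "hd p = hd p1"
      using assms(1) walk_append[of p1 "u # p2" R] p by auto
    then show ?thesis
      using walk_rtrancl_hd[OF _ sub(1) y] by simp
  next
    assume y: "y \<in> set p2"
    then have "p2 \<noteq> []"
      by auto
    then have "walk R p2" "last p = last p2"
      using assms(1) walk_append[of "p1 @ [u]" p2 R] p by auto
    then show ?thesis
      using walk_rtrancl_last[OF _ sub(2) y] by simp
  qed
qed

definition ear :: "('a \<times> 'a) set \<Rightarrow> 'a set \<Rightarrow> 'a \<Rightarrow> 'a \<Rightarrow> 'a list \<Rightarrow> bool" where
  "ear A X a b es \<longleftrightarrow> a \<in> X \<and> b \<in> X \<and> a \<noteq> b \<and> distinct es \<and> set es \<inter> X = {}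
     \<and> walk (A \<union> A\<inverse>) (a # es @ [b])"

lemma und_biconnected_add_ear:
  assumes X: "und_biconnected A X" and ear: "ear A X a b es"
  shows "und_biconnected A (X \<union> set es)"
proof -
  let ?R = "A \<union> A\<inverse>" and ?p = "a # es @ [b]"
  have ab: "a \<in> X" "b \<in> X" and p: "walk ?R ?p" "distinct ?p"
    using ear unfolding ear_def by auto
  have X_del: "und_connected A (X - {u})" for u
    using X unfolding und_biconnected_def by (cases "u \<in> X") auto
  have del: "und_connected A (X \<union> set es - {u})" for u
  proof (rule und_connected_attach[OF X_del])
    show "\<forall>y\<in>X \<union> set es - {u}. \<exists>x\<in>X - {u}. (x, y) \<in> (arcs_on ?R (X \<union> set es - {u}))\<^sup>*"
    proof
      fix y assume y: "y \<in> X \<union> set es - {u}"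
      show "\<exists>x\<in>X - {u}. (x, y) \<in> (arcs_on ?R (X \<union> set es - {u}))\<^sup>*"
      proof (cases "y \<in> X")
        case False
        then have y': "y \<in> set ?p - {u}"
          using y by auto
        then have "(a, y) \<in> (arcs_on ?R (set ?p - {u}))\<^sup>* \<or> (y, b) \<in> (arcs_on ?R (set ?p - {u}))\<^sup>*"
          using walk_avoiding_vertex[OF p, of y u] by simp
        then obtain x where x: "x \<in> X" "(x, y) \<in> (arcs_on ?R (set ?p - {u}))\<^sup>*"
        proof (elim disjE)
          assume "(y, b) \<in> (arcs_on ?R (set ?p - {u}))\<^sup>*"
          then show thesis
            using that[OF ab(2) rtrancl_arcs_on_Un_converse_sym] by blast
        qed (use ab(1) in blast)
        have "x \<noteq> u"
          using rtrancl_arcs_on_source_in[OF x(2)] y' by blast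
        moreover have "set ?p - {u} \<subseteq> X \<union> set es - {u}"
          using ab by auto
        ultimately show ?thesis
          using x(1) rtrancl_arcs_on_mono[OF _ x(2)] by blast
      qed (use y in auto)
    qed
  qed auto
  have "finite (X \<union> set es)" "3 \<le> card (X \<union> set es)"
    using X card_mono[of "X \<union> set es" X] unfolding und_biconnected_def by auto
  with del show ?thesis
    unfolding und_biconnected_def by (simp add: und_connected_if_vertex_deleted)
qed

definition drains_into :: "('a \<times> 'a) set \<Rightarrow> 'a set \<Rightarrow> 'a set \<Rightarrow> bool" where
  "drains_into A X E \<longleftrightarrow> (\<forall>x\<in>E. \<exists>t\<in>X. (x, t) \<in> (arcs_on A (X \<union> E))\<^sup>*)"

lemma reach_in_Un_drains_into:
  assumes "\<forall>x\<in>X. reach_in A X x i" "drains_into A X E"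
  shows "\<forall>x\<in>X \<union> E. reach_in A (X \<union> E) x i"
proof
  fix x assume x: "x \<in> X \<union> E"
  obtain t where t: "t \<in> X" "(x, t) \<in> (arcs_on A (X \<union> E))\<^sup>*"
    using x assms(2) unfolding drains_into_def by blast
  have "i \<in> X" "(t, i) \<in> (arcs_on A (X \<union> E))\<^sup>*"
    using assms(1) t(1) rtrancl_arcs_on_mono[of X "X \<union> E"] unfolding reach_in_def by auto
  then show "reach_in A (X \<union> E) x i"
    using x t(2) unfolding reach_in_def by (auto intro: rtrancl_trans)
qed

lemma ear_via_ancestor:
  assumes "S \<inter> X = {}" "j \<in> X" "b \<in> X" "b \<noteq> j" "(k, j) \<in> A" "(b, u) \<in> A \<union> A\<inverse>"
    and "u \<in> S" "(u, k) \<in> (arcs_on A S)\<^sup>*"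
  shows "\<exists>es. ear A X b j es \<and> k \<in> set es \<and> set es \<subseteq> S \<and> drains_into A X (set es)"
proof -
  obtain p where p: "walk A p" "distinct p" "hd p = u" "last p = k" "set p \<subseteq> S"
    using rtrancl_arcs_on_obtain_walk[OF assms(8,7)] .
  have "walk (A \<union> A\<inverse>) (b # p @ [j])"
    using walk_extend[OF walk_mono[OF p(1)]] p(3,4) assms(5,6) by auto
  then have "ear A X b j p"
    using assms(1-4) p(2,5) unfolding ear_def by auto
  moreover have "drains_into A X (set p)"
    using walk_arc_rtrancl[OF p(1) order_refl] p(4) assms(2,5) unfolding drains_into_def by blast
  moreover have "k \<in> set p"
    using p(1,4) by (auto simp: walk_def)
  ultimately show ?thesis
    using p(5) by blast
qed

lemma ear_via_crossing:
  assumes "S \<inter> X = {}" "j \<in> X" "b \<in> X" "b \<noteq> j" "(k, j) \<in> A" "(z, b) \<in> A"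
    and "y \<in> S" "(y, k) \<in> (arcs_on A S)\<^sup>*" "(y, y') \<in> A"
    and "y' \<in> S" "(y', z) \<in> (arcs_on A S)\<^sup>*" "(y', k) \<notin> (arcs_on A S)\<^sup>*"
  shows "\<exists>es. ear A X j b es \<and> k \<in> set es \<and> set es \<subseteq> S \<and> drains_into A X (set es)"
proof -
  obtain e where e: "walk A e" "distinct e" "hd e = y" "last e = k" "set e \<subseteq> S"
    using rtrancl_arcs_on_obtain_walk[OF assms(8,7)] .
  obtain f where f: "walk A f" "distinct f" "hd f = y'" "last f = z" "set f \<subseteq> S"
    using rtrancl_arcs_on_obtain_walk[OF assms(11,10)] .
  have "set e \<inter> set f = {}"
  proof -
    have "(x, k) \<in> (arcs_on A S)\<^sup>*" if "x \<in> set e" for x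
      using walk_rtrancl_last[OF e(1,5) that] e(4) by simp
    moreover have "(y', x) \<in> (arcs_on A S)\<^sup>*" if "x \<in> set f" for x
      using walk_rtrancl_hd[OF f(1,5) that] f(3) by simp
    ultimately show ?thesis
      using assms(12) by (meson disjoint_iff rtrancl_trans)
  qed
  moreover have "walk (A \<union> A\<inverse>) (j # (rev e @ f) @ [b])"
  proof (rule walk_extend)
    have "walk (A \<union> A\<inverse>) (rev e)" "walk (A \<union> A\<inverse>) f"
      using walk_mono[OF walk_rev[OF e(1)]] walk_mono[OF f(1)] by auto
    moreover have "rev e \<noteq> []" "f \<noteq> []" "last (rev e) = y" "hd f = y'"
      using e(1,3) f(1,3) by (auto simp: walk_def last_rev)
    ultimately show "walk (A \<union> A\<inverse>) (rev e @ f)"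
      using walk_append[of "rev e" f "A \<union> A\<inverse>"] assms(9) by simp
  qed (use e f assms(5,6) in \<open>auto simp: walk_def hd_rev\<close>)
  ultimately have "ear A X j b (rev e @ f)"
    using assms(1-4) e(2,5) f(2,5) unfolding ear_def by auto
  moreover have "drains_into A X (set (rev e @ f))"
    unfolding drains_into_def
  proof
    fix x assume "x \<in> set (rev e @ f)"
    then consider "x \<in> set e" | "x \<in> set f"
      by auto
    then show "\<exists>t\<in>X. (x, t) \<in> (arcs_on A (X \<union> set (rev e @ f)))\<^sup>*"
    proof cases
      case 1
      then show ?thesis
        using walk_arc_rtrancl[OF e(1), of "set (rev e @ f)" j X x] 1 e(4) assms(2,5) by auto
    next
      case 2
      then show ?thesis
        using walk_arc_rtrancl[OF f(1), of "set (rev e @ f)" b X x] 2 f(4) assms(3,6) by auto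
    qed
  qed
  moreover have "k \<in> set (rev e @ f)"
    using e(1,4) by (auto simp: walk_def)
  ultimately show ?thesis
    using e(5) f(5) by (metis Un_subset_iff set_append set_rev)
qed

text \<open>The walk from \<open>v\<close> leaves \<open>S\<close> by an arc \<open>z \<rightarrow> b\<close> into \<open>X - {j}\<close>; on the way from \<open>v\<close>
  to \<open>z\<close> it passes from the ancestors of \<open>k\<close> to non-ancestors by an arc \<open>y \<rightarrow> y'\<close>.\<close>

lemma ear_via_exit:
  assumes "S \<inter> X = {}" "j \<in> X" "(k, j) \<in> A" "v \<in> S" "(v, k) \<in> (arcs_on A S)\<^sup>*"
    and "walk A q" "hd q = v" "last q \<notin> S" "set q \<subseteq> S \<union> (X - {j})"
    and no_attachment: "\<forall>u\<in>S. \<forall>b\<in>X - {j}. (u, k) \<in> (arcs_on A S)\<^sup>* \<longrightarrow> (b, u) \<notin> A \<union> A\<inverse>"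
  shows "\<exists>b es. ear A X j b es \<and> k \<in> set es \<and> set es \<subseteq> S \<and> drains_into A X (set es)"
proof -
  obtain ys z b zs where
    qz: "q = ys @ z # b # zs" "\<forall>x\<in>set (ys @ [z]). x \<in> S" "b \<notin> S"
    using walk_first_exit[OF assms(6), of "\<lambda>x. x \<in> S"] assms(4,7,8) by blast
  have b: "b \<in> X" "b \<noteq> j" "(z, b) \<in> A"
    using assms(6,9) qz(1,3) walk_append[of "ys @ [z]" "b # zs" A] by auto
  have walk_vz: "walk A (ys @ [z])" "hd (ys @ [z]) = v"
    using assms(6,7) qz(1) walk_append[of "ys @ [z]" "b # zs" A] by (auto simp: hd_append)
  have "(z, k) \<notin> (arcs_on A S)\<^sup>*"
    using no_attachment b qz(2) by auto
  then have "(last (ys @ [z]), k) \<notin> (arcs_on A S)\<^sup>*"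
    by simp
  moreover have "(hd (ys @ [z]), k) \<in> (arcs_on A S)\<^sup>*"
    using walk_vz(2) assms(5) by simp
  ultimately obtain ys' y y' zs' where
    yy: "ys @ [z] = ys' @ y # y' # zs'" "\<forall>x\<in>set (ys' @ [y]). (x, k) \<in> (arcs_on A S)\<^sup>*"
      "(y', k) \<notin> (arcs_on A S)\<^sup>*"
    using walk_first_exit[OF walk_vz(1), of "\<lambda>x. (x, k) \<in> (arcs_on A S)\<^sup>*"] by blast
  have y_y': "y \<in> S" "y' \<in> S" "(y, k) \<in> (arcs_on A S)\<^sup>*"
    using qz(2) yy(2) unfolding yy(1) by auto
  have "walk A (y' # zs')" "(y, y') \<in> A"
    using walk_vz(1) walk_append[of "ys' @ [y]" "y' # zs'" A] yy(1) by auto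
  moreover have "set (y' # zs') \<subseteq> S"
    using qz(2) by (auto simp: yy(1))
  moreover have "last (y' # zs') = z"
    using arg_cong[OF yy(1), of last] by simp
  ultimately have "(y', z) \<in> (arcs_on A S)\<^sup>*"
    using walk_rtrancl_last[of A "y' # zs'" S y'] by simp
  then show ?thesis
    using ear_via_crossing[OF assms(1,2) b(1,2) assms(3) b(3) y_y'(1,3) \<open>(y, y') \<in> A\<close> y_y'(2)]
      yy(3) by blast
qed

lemma exists_ear_through:
  assumes "j \<in> X" "k \<in> V" "k \<notin> X" "(k, j) \<in> A" "w \<in> X" "w \<noteq> j"
    and "reach_in A (V - {j}) v k" "reach_in A (V - {j}) v w"
  shows "\<exists>a b es. ear A X a b es \<and> k \<in> set es \<and> set es \<subseteq> V \<and> drains_into A X (set es)"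
proof -
  define S where "S = V - {j} - X"
  have S: "S \<inter> X = {}" "S \<subseteq> V" "k \<in> S"
    using assms(1-3) unfolding S_def by auto
  have "\<exists>a b es. ear A X a b es \<and> k \<in> set es \<and> set es \<subseteq> S \<and> drains_into A X (set es)"
  proof (cases "\<exists>u\<in>S. \<exists>b\<in>X - {j}. (u, k) \<in> (arcs_on A S)\<^sup>* \<and> (b, u) \<in> A \<union> A\<inverse>")
    case True
    then obtain u b where "u \<in> S" "b \<in> X" "b \<noteq> j" "(u, k) \<in> (arcs_on A S)\<^sup>*" "(b, u) \<in> A \<union> A\<inverse>"
      by blast
    then show ?thesis
      using ear_via_ancestor[OF S(1) assms(1) _ _ assms(4)] by blast
  next
    case False
    then have no_attachment:
      "\<forall>u\<in>S. \<forall>b\<in>X - {j}. (u, k) \<in> (arcs_on A S)\<^sup>* \<longrightarrow> (b, u) \<notin> A \<union> A\<inverse>"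
      by blast
    have "(v, k) \<in> (arcs_on A S)\<^sup>*"
    proof (rule rtrancl_arcs_on_restrict)
      show "(v, k) \<in> (arcs_on A (V - {j}))\<^sup>*"
        using assms(7) unfolding reach_in_def by simp
      show "(u', k) \<notin> (arcs_on A S)\<^sup>*" if "u \<in> V - {j} - S" "(u, u') \<in> A" for u u'
      proof
        assume u'k: "(u', k) \<in> (arcs_on A S)\<^sup>*"
        moreover have "u' \<in> S"
          using rtrancl_arcs_on_source_in[OF u'k S(3)] .
        moreover have "u \<in> X - {j}"
          using that(1) unfolding S_def by blast
        ultimately show False
          using no_attachment that(2) by blast
      qed
    qed (rule S(3))
    moreover have "v \<in> S"
      using rtrancl_arcs_on_source_in[OF calculation S(3)] .
    moreover obtain q where q: "walk A q" "hd q = v" "last q = w" "set q \<subseteq> V - {j}"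
      using assms(8) rtrancl_arcs_on_obtain_walk unfolding reach_in_def by metis
    moreover have "last q \<notin> S" "set q \<subseteq> S \<union> (X - {j})"
      using S(1) assms(5) q(3,4) unfolding S_def by auto
    ultimately show ?thesis
      using ear_via_exit[OF S(1) assms(1,4), of v q] no_attachment by blast
  qed
  then show ?thesis
    using S(2) by blast
qed

lemma rooted_biconnected_extension:
  assumes "und_biconnected A X" "X \<subseteq> V" "\<forall>x\<in>X. reach_in A X x i"
    and "j \<in> X" "k \<in> V" "(k, j) \<in> A" "w \<in> X" "w \<noteq> j"
    and "reach_in A (V - {j}) v k" "reach_in A (V - {j}) v w"
  obtains X' where "X \<subseteq> X'" "X' \<subseteq> V" "k \<in> X'" "und_biconnected A X'" "\<forall>x\<in>X'. reach_in A X' x i"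
proof (cases "k \<in> X")
  case False
  then obtain a b es where es: "ear A X a b es" "k \<in> set es" "set es \<subseteq> V" "drains_into A X (set es)"
    using exists_ear_through[OF assms(4,5) _ assms(6-10)] by blast
  show thesis
  proof (rule that[of "X \<union> set es"])
    show "und_biconnected A (X \<union> set es)"
      by (rule und_biconnected_add_ear[OF assms(1) es(1)])
    show "\<forall>x\<in>X \<union> set es. reach_in A (X \<union> set es) x i"
      by (rule reach_in_Un_drains_into[OF assms(3) es(4)])
  qed (use assms(2) es(2,3) in auto)
qed (use assms that in blast)

lemma has_block_root_gen_step:
  assumes "has_block_root V A W" "gen_step V A W W'"
  shows "has_block_root V A W'"
proof -
  obtain X i where X: "W \<subseteq> X" "und_biconnected A X" "X \<subseteq> V" "i \<in> W"
    and root_W: "\<forall>w\<in>W. reach_in A W w i" and root_X: "\<forall>x\<in>X. reach_in A X x i"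
    using assms(1) unfolding has_block_root_def directed_sub_block_def by blast
  obtain k j where k: "k \<in> V" "W' = W \<union> {k}" and j: "j \<in> W" "(k, j) \<in> A"
    and not_partitioning: "\<not> dyn_part V A j k (W - {j})"
    using assms(2) unfolding gen_step_def by auto
  obtain v w where "reach_in A (V - {j}) v k" "reach_in A (V - {j}) v w" "w \<in> W - {j}"
    using not_partitioning unfolding dyn_part_def fE_def IN_set_def by blast
  then obtain X' where X': "X \<subseteq> X'" "X' \<subseteq> V" "k \<in> X'" "und_biconnected A X'"
    "\<forall>x\<in>X'. reach_in A X' x i"
    using rooted_biconnected_extension[OF X(2,3) root_X _ k(1) j(2)] X(1) j(1) by blast
  have "drains_into A W {k}"
    using j unfolding drains_into_def arcs_on_def by blast
  then have "\<forall>w\<in>W'. reach_in A W' w i"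
    using reach_in_Un_drains_into[OF root_W] k(2) by blast
  moreover have "directed_sub_block V A X'"
    using X' X(1,4) unfolding directed_sub_block_def by blast
  ultimately show ?thesis
    using X(1,4) X'(1,3,5) k(2) unfolding has_block_root_def by blast
qed

lemma generated_from_pair_last_step:
  assumes "generated_from_pair V A W" "3 < card W"
  obtains W' where "generated_from_pair V A W'" "gen_step V A W' W" "card W = Suc (card W')"
proof -
  obtain P where "connected_pair V A P" "generated_from V A P W"
    using assms(1) unfolding generated_from_pair_def by blast
  then have P: "connected_pair V A P" "finite W" "card P = 2" "(gen_step V A)\<^sup>*\<^sup>* P W"
    unfolding generated_from_def connected_pair_def by auto
  then have "P \<noteq> W"
    using assms(2) by auto
  then obtain W' where W': "(gen_step V A)\<^sup>*\<^sup>* P W'" "gen_step V A W' W"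
    using P(4) by (metis rtranclp.cases)
  then obtain k where "k \<notin> W'" "W = insert k W'"
    unfolding gen_step_def by blast
  then have "finite W'" "card W = Suc (card W')"
    using P(2) by auto
  then have "generated_from V A P W'"
    using P(3) W'(1) assms(2) card.infinite[of P] unfolding generated_from_def by auto
  then show thesis
    using that P(1) W'(2) \<open>card W = Suc (card W')\<close> unfolding generated_from_pair_def by blast
qed

theorem mainTheorem7:
  fixes V :: "'a set" and A :: "('a \<times> 'a) set" and n :: nat
  assumes "digraph V A"
    and "n \<ge> 3"
    and "\<forall>W. W \<subseteq> V \<and> card W = n \<and> generated_from_pair V A W \<longrightarrow> has_block_root V A W"
  shows "\<forall>W. W \<subseteq> V \<and> card W = n + 1 \<and> generated_from_pair V A W \<longrightarrow> has_block_root V A W"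
proof (intro allI impI)
  fix W assume W: "W \<subseteq> V \<and> card W = n + 1 \<and> generated_from_pair V A W"
  then obtain W' where W': "generated_from_pair V A W'" "gen_step V A W' W" "card W = Suc (card W')"
    using generated_from_pair_last_step assms(2) by (metis Suc_eq_plus1 Suc_le_lessD le_imp_less_Suc)
  moreover have "W' \<subseteq> V"
    using W W'(2) unfolding gen_step_def by blast
  ultimately have "has_block_root V A W'"
    using assms(3) W by simp
  then show "has_block_root V A W"
    by (rule has_block_root_gen_step[OF _ W'(2)])
qed

end
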